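(* Let $p\in[1,\infty)$, let $0 < \mathsf{D}_1 \le \mathsf{D}_2$ and $\mathsf{K}>0$ be reals, and let $x\in\{-\Delta,\dots,\Delta\}^d$ with $x\ne 0$. Let $u_1,\dots,u_d$ be independent $\mathrm{Exp}(1)$ random variables and, for $t\in\mathbb{R}$ and $\sigma\in\{-1,1\}$, let $G_{x,u}(t,\sigma)=\{i\in[d] : x_i\sigma/u_i^{1/p}\ge t\}$. Then $$\Pr_{u}\left[1 \le \Big|\bigcup_{\sigma\in\{-1,1\}} G_{x,u}\big(\|x\|_p/\mathsf{D}_1,\sigma\big)\Big| \le \Big|\bigcup_{\sigma\in\{-1,1\}} G_{x,u}\big(\|x\|_p/\mathsf{D}_2,\sigma\big)\Big| \le \mathsf{K}\right] \ge 1-\exp(-\mathsf{D}_1^p)-\frac{\mathsf{D}_2^p}{\mathsf{K}}.$$ In particular, for $\delta_2\in(0,1)$, $\mathsf{D}_1=\ln(2/\delta_2)^{1/p}$, $\mathsf{D}_2=2\mathsf{D}_1$ and $\mathsf{K}=2\mathsf{D}_2^p/\delta_2$, the probability is at least $1-\delta_2$.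
   Context: $\mathrm{Exp}(1)$ denotes the exponential distribution with rate $1$, i.e. $\Pr[u > a] = e^{-a}$ for $a\ge 0$. *)

theory Defs
  imports "HOL-Probability.Probability"
begin

text \<open>Joint law of d independent Exp(1) random variables u_0,...,u_{d-1}
  (coordinates indexed by {..<d}, standing for [d]).\<close>
definition exp_prod :: "nat \<Rightarrow> (nat \<Rightarrow> real) measure" where
  "exp_prod d = PiM {..<d} (\<lambda>_. density lborel (exponential_density 1))"

definition lp_norm :: "real \<Rightarrow> nat \<Rightarrow> (nat \<Rightarrow> int) \<Rightarrow> real" where
  "lp_norm p d x = (\<Sum>i<d. \<bar>real_of_int (x i)\<bar> powr p) powr (1 / p)"

definition G_set :: "real \<Rightarrow> nat \<Rightarrow> (nat \<Rightarrow> int) \<Rightarrow> (nat \<Rightarrow> real) \<Rightarrow> real \<Rightarrow> real \<Rightarrow> nat set" where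
  "G_set p d x u t \<sigma> = {i \<in> {..<d}. real_of_int (x i) * \<sigma> / (u i powr (1 / p)) \<ge> t}"

definition G_union :: "real \<Rightarrow> nat \<Rightarrow> (nat \<Rightarrow> int) \<Rightarrow> (nat \<Rightarrow> real) \<Rightarrow> real \<Rightarrow> nat set" where
  "G_union p d x u t = (\<Union>\<sigma>\<in>{-1, 1::real}. G_set p d x u t \<sigma>)"

definition event_prob :: "real \<Rightarrow> nat \<Rightarrow> (nat \<Rightarrow> int) \<Rightarrow> real \<Rightarrow> real \<Rightarrow> real \<Rightarrow> real" where
  "event_prob p d x D1 D2 K = measure (exp_prod d)
     {u \<in> space (exp_prod d).
        1 \<le> card (G_union p d x u (lp_norm p d x / D1)) \<and>
        card (G_union p d x u (lp_norm p d x / D1)) \<le> card (G_union p d x u (lp_norm p d x / D2)) \<and>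
        real (card (G_union p d x u (lp_norm p d x / D2))) \<le> K}"

end

theory Submission
  imports Defs
begin

text \<open>Coordinate i lies in the union of the sets G(t, \<sigma>) iff |x_i| / u_i^(1/p) \<ge> t, i.e. iff
  u_i \<le> c_i = (|x_i| / t)^p, and for t = \<parallel>x\<parallel>_p / D these thresholds sum to D^p.
  The union at level D1 is empty only if every u_i exceeds its threshold, which by independence
  has probability \<Prod>_i exp(-c_i) = exp(-D1^p).  The union at level D2 has expected size
  \<Sum>_i (1 - exp(-c_i)) \<le> D2^p, so Markov's inequality bounds the probability that it exceeds K;
  the middle inequality holds because the sets shrink as t grows.  The bound \<Delta> on the
  coordinates of x plays no role.\<close>

lemma measure_exponential_atMost:
  assumes "0 < l" "0 \<le> c"
  shows "measure (density lborel (exponential_density l)) {..c} = 1 - exp (- c * l)"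
  using emeasure_erlang_density[of l 0 c] assms by (simp add: measure_def erlang_CDF_0 mult.commute)

lemma measure_exponential_not_greaterThanAtMost:
  assumes "0 < l" "0 \<le> c"
  shows "measure (density lborel (exponential_density l)) (- {0<..c}) = exp (- c * l)"
proof -
  let ?E = "density lborel (exponential_density l)"
  interpret prob_space ?E
    using assms(1) by (rule prob_space_exponential_density)
  have "{..c} - {..0} = {0<..c}"
    by auto
  then have "measure ?E {0<..c} = measure ?E {..c} - measure ?E {..0}"
    using finite_measure_Diff[of "{..c}" "{..0}"] assms(2) by simp
  then have "measure ?E {0<..c} = 1 - exp (- c * l)"
    using assms by (simp add: measure_exponential_atMost)
  then show ?thesis
    using prob_compl[of "{0<..c}"] by (simp add: Compl_eq_Diff_UNIV)
qed

lemma measure_exponential_atMost_le: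
  assumes "0 < l" "0 \<le> c"
  shows "measure (density lborel (exponential_density l)) {..c} \<le> c * l"
  using assms exp_ge_add_one_self[of "- c * l"] by (simp add: measure_exponential_atMost)

lemma card_in_eq_sum_indicator:
  "finite I \<Longrightarrow> real (card {i\<in>I. u i \<in> A i}) = (\<Sum>i\<in>I. indicator (A i) (u i))"
  by (simp add: indicator_def sum_of_bool_eq Collect_conj_eq)

context finite_product_prob_space
begin

lemma measure_PiM_Collect:
  assumes "\<And>i. i \<in> I \<Longrightarrow> A i \<in> sets (M i)"
  shows "measure (PiM I M) {u \<in> space (PiM I M). \<forall>i\<in>I. u i \<in> A i} = (\<Prod>i\<in>I. measure (M i) (A i))"
proof -
  have "Pi\<^sub>E I A \<subseteq> space (PiM I M)"
    unfolding space_PiM using sets.sets_into_space[OF assms] by (rule PiE_mono)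
  then have "{u \<in> space (PiM I M). \<forall>i\<in>I. u i \<in> A i} = Pi\<^sub>E I A"
    by (auto simp: space_PiM)
  then show ?thesis
    using finite_measure_PiM_emb[OF assms] by simp
qed

lemma integral_PiM_indicator_component:
  assumes "i \<in> I" "A \<in> sets (M i)"
  shows "(\<integral>u. indicator A (u i) \<partial>PiM I M) = measure (M i) A"
proof -
  have "(\<integral>u. indicator A (u i) \<partial>PiM I M) = (\<integral>u. indicator {u \<in> space (PiM I M). u i \<in> A} u \<partial>PiM I M)"
    by (intro Bochner_Integration.integral_cong) (auto simp: indicator_def)
  also have "\<dots> = measure (PiM I M) {u \<in> space (PiM I M). u i \<in> A}"
    by (simp add: Int_absorb2)
  finally show ?thesis
    using emeasure_PiM_Collect_single[OF assms] by (simp add: measure_def)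
qed

lemma measure_PiM_card_in_ge:
  fixes K :: real
  assumes A: "\<And>i. i \<in> I \<Longrightarrow> A i \<in> sets (M i)" and K: "0 < K"
  shows "measure (PiM I M) {u \<in> space (PiM I M). K \<le> card {i\<in>I. u i \<in> A i}}
           \<le> (\<Sum>i\<in>I. measure (M i) (A i)) / K"
proof -
  have ind_meas: "(\<lambda>u. indicator (A i) (u i) :: real) \<in> borel_measurable (PiM I M)" if "i \<in> I" for i
    using A[OF that] that by (intro borel_measurable_indicator' measurable_component_singleton) auto
  have ind_int: "integrable (PiM I M) (\<lambda>u. indicator (A i) (u i) :: real)" if "i \<in> I" for i
    using ind_meas[OF that] by (intro integrable_const_bound[where B=1]) (auto simp: indicator_def)
  have "measure (PiM I M) {u \<in> space (PiM I M). K \<le> (\<Sum>i\<in>I. indicator (A i) (u i))}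
          \<le> (\<integral>u. (\<Sum>i\<in>I. indicator (A i) (u i)) \<partial>PiM I M) / K"
    using ind_int K by (intro integral_Markov_inequality_measure[where A="{}"]) (auto intro!: AE_I2 sum_nonneg)
  also have "(\<integral>u. (\<Sum>i\<in>I. indicator (A i) (u i)) \<partial>PiM I M) = (\<Sum>i\<in>I. measure (M i) (A i))"
    using ind_int A by (simp add: integral_PiM_indicator_component)
  finally show ?thesis
    by (simp add: card_in_eq_sum_indicator finite_index)
qed

end

lemma le_div_powr_iff:
  fixes a t v p :: real
  assumes "0 \<le> a" "0 < t" "0 < v" "0 < p"
  shows "t \<le> a / v powr (1 / p) \<longleftrightarrow> v \<le> (a / t) powr p"
proof -
  have "t \<le> a / v powr (1 / p) \<longleftrightarrow> v powr (1 / p) \<le> a / t"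
    using assms by (simp add: field_simps)
  also have "\<dots> \<longleftrightarrow> (v powr (1 / p)) powr p \<le> (a / t) powr p"
  proof
    show "v powr (1 / p) \<le> a / t \<Longrightarrow> (v powr (1 / p)) powr p \<le> (a / t) powr p"
      using assms by (intro powr_mono2) auto
    show "(v powr (1 / p)) powr p \<le> (a / t) powr p \<Longrightarrow> v powr (1 / p) \<le> a / t"
      using assms powr_less_mono2[of p "a / t" "v powr (1 / p)"] by (meson not_le divide_nonneg_pos)
  qed
  finally show ?thesis
    using assms by (simp add: powr_powr)
qed

lemma G_union_antimono:
  "t2 \<le> t1 \<Longrightarrow> G_union p d x u t1 \<subseteq> G_union p d x u t2"
  unfolding G_union_def G_set_def by auto

lemma finite_G_union: "finite (G_union p d x u t)"
  unfolding G_union_def G_set_def by auto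

lemma mem_G_union_iff_abs:
  "i \<in> G_union p d x u t \<longleftrightarrow> i < d \<and> t \<le> \<bar>real_of_int (x i)\<bar> / \<bar>u i powr (1 / p)\<bar>"
proof -
  have "(\<exists>\<sigma>\<in>{-1, 1::real}. t \<le> real_of_int (x i) * \<sigma> / u i powr (1 / p))
          \<longleftrightarrow> t \<le> \<bar>real_of_int (x i) / u i powr (1 / p)\<bar>"
    by (auto simp: abs_if)
  then show ?thesis
    unfolding G_union_def G_set_def by (auto simp: abs_divide)
qed

text \<open>For u i < 0 the value u i powr (1 / p) is junk, hence the positivity hypothesis;
  u i \<le> 0 has probability zero.\<close>

lemma mem_G_union_iff:
  assumes "0 < p" "0 < t" "0 < u i"
  shows "i \<in> G_union p d x u t \<longleftrightarrow> i < d \<and> u i \<le> (\<bar>real_of_int (x i)\<bar> / t) powr p"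
  using le_div_powr_iff[of "\<bar>real_of_int (x i)\<bar>" t "u i" p] assms
  by (simp add: mem_G_union_iff_abs)

lemma G_union_subset:
  assumes "0 < p" "0 < t"
  shows "G_union p d x u t \<subseteq> {i \<in> {..<d}. u i \<le> (\<bar>real_of_int (x i)\<bar> / t) powr p}"
proof
  fix i assume i: "i \<in> G_union p d x u t"
  show "i \<in> {i \<in> {..<d}. u i \<le> (\<bar>real_of_int (x i)\<bar> / t) powr p}"
  proof (cases "0 < u i")
    case True
    then show ?thesis using i assms by (simp add: mem_G_union_iff)
  next
    case False
    then have "u i \<le> (\<bar>real_of_int (x i)\<bar> / t) powr p"
      by (meson le_less_trans not_le powr_ge_zero)
    then show ?thesis using i by (simp add: mem_G_union_iff_abs)
  qed
qed

lemma card_G_union_bounds: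
  assumes "0 < p" "0 < t2" "t2 \<le> t1"
    and "i < d" "0 < u i" "u i \<le> (\<bar>real_of_int (x i)\<bar> / t1) powr p"
  shows "1 \<le> card (G_union p d x u t1)"
    and "card (G_union p d x u t1) \<le> card (G_union p d x u t2)"
    and "card (G_union p d x u t2) \<le> card {i \<in> {..<d}. u i \<le> (\<bar>real_of_int (x i)\<bar> / t2) powr p}"
proof -
  have "i \<in> G_union p d x u t1"
    using assms by (simp add: mem_G_union_iff)
  then show "1 \<le> card (G_union p d x u t1)"
    using finite_G_union by (metis One_nat_def Suc_leI card_gt_0_iff empty_iff)
  show "card (G_union p d x u t1) \<le> card (G_union p d x u t2)"
    using assms(3) by (intro card_mono finite_G_union G_union_antimono)
  show "card (G_union p d x u t2) \<le> card {i \<in> {..<d}. u i \<le> (\<bar>real_of_int (x i)\<bar> / t2) powr p}"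
    using assms(1,2) by (intro card_mono G_union_subset) auto
qed

lemma lp_norm_pos:
  assumes "0 < p" "\<exists>i<d. x i \<noteq> 0"
  shows "0 < lp_norm p d x"
proof -
  obtain j where "j < d" "x j \<noteq> 0"
    using assms(2) by blast
  then have "0 < (\<Sum>i<d. \<bar>real_of_int (x i)\<bar> powr p)"
    by (intro sum_pos2[of _ j]) auto
  then show ?thesis
    by (simp add: lp_norm_def)
qed

lemma sum_powr_div_lp_norm:
  assumes "0 < p" "0 < lp_norm p d x" "0 < D"
  shows "(\<Sum>i<d. (\<bar>real_of_int (x i)\<bar> / (lp_norm p d x / D)) powr p) = D powr p"
proof -
  define S where "S = (\<Sum>i<d. \<bar>real_of_int (x i)\<bar> powr p)"
  have "0 \<le> S"
    by (simp add: S_def sum_nonneg)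
  then have S: "0 < S" and norm_p: "lp_norm p d x powr p = S"
    using assms(1,2) by (auto simp: S_def lp_norm_def powr_powr less_le)
  have "(\<Sum>i<d. (\<bar>real_of_int (x i)\<bar> / (lp_norm p d x / D)) powr p)
          = (\<Sum>i<d. \<bar>real_of_int (x i)\<bar> powr p / (lp_norm p d x / D) powr p)"
    using assms by (intro sum.cong) (simp_all add: powr_divide powr_mult)
  also have "\<dots> = S / (lp_norm p d x / D) powr p"
    by (simp add: S_def sum_divide_distrib)
  also have "\<dots> = S / (S / D powr p)"
    using assms powr_divide[of "lp_norm p d x" D p] by (simp add: norm_p)
  also have "\<dots> = D powr p"
    using S by simp
  finally show ?thesis .
qed

lemma measurable_card_G_union [measurable]:
  "(\<lambda>u. real (card (G_union p d x u t))) \<in> borel_measurable (exp_prod d)"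
proof -
  have "(\<lambda>u. indicator {r. t \<le> \<bar>real_of_int (x i)\<bar> / \<bar>r powr (1 / p)\<bar>} (u i) :: real)
          \<in> borel_measurable (exp_prod d)" if "i < d" for i
  proof (rule measurable_compose[where f = "\<lambda>u. u i"])
    show "(\<lambda>u. u i) \<in> borel_measurable (exp_prod d)"
      using that unfolding exp_prod_def by (simp add: measurable_component_singleton)
    show "indicator {r. t \<le> \<bar>real_of_int (x i)\<bar> / \<bar>r powr (1 / p)\<bar>} \<in> borel_measurable borel"
      by measurable
  qed
  moreover have "real (card (G_union p d x u t))
      = (\<Sum>i<d. indicator {r. t \<le> \<bar>real_of_int (x i)\<bar> / \<bar>r powr (1 / p)\<bar>} (u i))" for u
  proof -
    have "G_union p d x u t = {i \<in> {..<d}. u i \<in> {r. t \<le> \<bar>real_of_int (x i)\<bar> / \<bar>r powr (1 / p)\<bar>}}"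
      by (auto simp: mem_G_union_iff_abs)
    then show ?thesis
      by (simp only: card_in_eq_sum_indicator[OF finite_lessThan])
  qed
  ultimately show ?thesis
    by simp
qed

lemma sets_G_union_event:
  fixes K :: real
  shows "{u \<in> space (exp_prod d). 1 \<le> card (G_union p d x u t1)
            \<and> card (G_union p d x u t1) \<le> card (G_union p d x u t2)
            \<and> real (card (G_union p d x u t2)) \<le> K} \<in> sets (exp_prod d)"
proof -
  let ?N = "\<lambda>t u. real (card (G_union p d x u t))"
  let ?S = "\<lambda>f g. {u \<in> space (exp_prod d). f u \<le> g u}"
  have "{u \<in> space (exp_prod d). 1 \<le> card (G_union p d x u t1)
            \<and> card (G_union p d x u t1) \<le> card (G_union p d x u t2)
            \<and> real (card (G_union p d x u t2)) \<le> K}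
        = ?S (\<lambda>_. 1) (?N t1) \<inter> ?S (?N t1) (?N t2) \<inter> ?S (?N t2) (\<lambda>_. K)"
    by auto
  also have "\<dots> \<in> sets (exp_prod d)"
    by (intro sets.Int borel_measurable_le measurable_card_G_union borel_measurable_const)
  finally show ?thesis .
qed

lemma finite_product_prob_space_exponential:
  "0 < l \<Longrightarrow> finite I \<Longrightarrow>
     finite_product_prob_space (\<lambda>_. density lborel (exponential_density l)) I"
  using product_prob_spaceI[OF prob_space_exponential_density]
  by (simp add: finite_product_prob_space_def finite_product_sigma_finite_def
      finite_product_sigma_finite_axioms_def product_prob_space_def)

lemma prob_space_exp_prod: "prob_space (exp_prod d)"
  unfolding exp_prod_def by (intro prob_space_PiM prob_space_exponential_density) simp

lemma measure_exp_prod_all_above: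
  assumes "\<And>i. 0 \<le> c i"
  shows "measure (exp_prod d) {u \<in> space (exp_prod d). \<forall>i\<in>{..<d}. u i \<in> - {0<..c i}}
           = exp (- (\<Sum>i<d. c i))"
proof -
  let ?Exp = "density lborel (exponential_density (1::real))"
  interpret finite_product_prob_space "\<lambda>_. ?Exp" "{..<d}"
    by (simp add: finite_product_prob_space_exponential)
  have "measure (exp_prod d) {u \<in> space (exp_prod d). \<forall>i\<in>{..<d}. u i \<in> - {0<..c i}}
          = (\<Prod>i<d. measure ?Exp (- {0<..c i}))"
    unfolding exp_prod_def by (rule measure_PiM_Collect) simp
  also have "\<dots> = exp (- (\<Sum>i<d. c i))"
    by (simp add: measure_exponential_not_greaterThanAtMost assms exp_sum[symmetric] sum_negf)
  finally show ?thesis .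
qed

lemma measure_exp_prod_count_ge:
  fixes K :: real
  assumes "\<And>i. 0 \<le> c i" "0 < K"
  shows "measure (exp_prod d) {u \<in> space (exp_prod d). K \<le> card {i \<in> {..<d}. u i \<in> {..c i}}}
           \<le> (\<Sum>i<d. c i) / K"
proof -
  let ?Exp = "density lborel (exponential_density (1::real))"
  interpret finite_product_prob_space "\<lambda>_. ?Exp" "{..<d}"
    by (simp add: finite_product_prob_space_exponential)
  have "measure (exp_prod d) {u \<in> space (exp_prod d). K \<le> card {i \<in> {..<d}. u i \<in> {..c i}}}
          \<le> (\<Sum>i<d. measure ?Exp {..c i}) / K"
    unfolding exp_prod_def using assms(2) by (intro measure_PiM_card_in_ge) auto
  also have "\<dots> \<le> (\<Sum>i<d. c i) / K"
    using assms measure_exponential_atMost_le[of 1]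
    by (intro divide_right_mono sum_mono) auto
  finally show ?thesis .
qed

lemma event_prob_lower_bound:
  fixes D1 D2 K :: real
  assumes p: "0 < p" and x: "\<exists>i<d. x i \<noteq> 0"
    and D1: "0 < D1" and D12: "D1 \<le> D2" and K: "0 < K"
  shows "event_prob p d x D1 D2 K \<ge> 1 - exp (- (D1 powr p)) - D2 powr p / K"
proof -
  define M where "M = exp_prod d"
  interpret prob_space M
    unfolding M_def by (rule prob_space_exp_prod)
  have norm: "0 < lp_norm p d x"
    using p x by (rule lp_norm_pos)
  define t where "t D = lp_norm p d x / D" for D
  have t_pos: "0 < t D" if "0 < D" for D
    using norm that by (simp add: t_def)
  define c where "c D i = (\<bar>real_of_int (x i)\<bar> / t D) powr p" for D i
  have sum_c: "(\<Sum>i<d. c D i) = D powr p" if "0 < D" for D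
    unfolding c_def t_def using p norm that by (rule sum_powr_div_lp_norm)
  have c_nonneg: "0 \<le> c D i" for D i
    by (simp add: c_def)
  let ?G = "\<lambda>D u. G_union p d x u (t D)"
  define E where "E = {u \<in> space M. 1 \<le> card (?G D1 u) \<and> card (?G D1 u) \<le> card (?G D2 u)
                                   \<and> real (card (?G D2 u)) \<le> K}"
  define Miss where "Miss = {u \<in> space M. \<forall>i\<in>{..<d}. u i \<in> - {0<..c D1 i}}"
  define Crowd where "Crowd = {u \<in> space M. K \<le> card {i \<in> {..<d}. u i \<in> {..c D2 i}}}"
  have E_sets: "E \<in> sets M"
    unfolding E_def M_def by (rule sets_G_union_event)
  have Miss_sets: "Miss \<in> sets M" and Crowd_sets: "Crowd \<in> sets M"
    unfolding Miss_def Crowd_def M_def exp_prod_def by measurable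
  have "space M - (Miss \<union> Crowd) \<subseteq> E"
  proof
    fix u assume u: "u \<in> space M - (Miss \<union> Crowd)"
    obtain i where "i < d" "0 < u i" "u i \<le> c D1 i"
      using u unfolding Miss_def by auto
    moreover have "t D2 \<le> t D1"
      using D1 D12 norm by (simp add: t_def frac_le)
    ultimately have "1 \<le> card (?G D1 u)" "card (?G D1 u) \<le> card (?G D2 u)"
      and "card (?G D2 u) \<le> card {i \<in> {..<d}. u i \<in> {..c D2 i}}"
      using card_G_union_bounds[OF p t_pos] D1 D12 unfolding c_def by auto
    then show "u \<in> E"
      using u unfolding E_def Crowd_def by auto
  qed
  then have "1 - measure M E \<le> measure M (Miss \<union> Crowd)"
    using Miss_sets Crowd_sets E_sets by (auto simp: prob_compl[symmetric] intro!: finite_measure_mono)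
  also have "\<dots> \<le> measure M Miss + measure M Crowd"
    using Miss_sets Crowd_sets by (rule measure_Un_le)
  also have "\<dots> \<le> exp (- (D1 powr p)) + D2 powr p / K"
    using measure_exp_prod_all_above[of "c D1" d] measure_exp_prod_count_ge[of "c D2" K d]
    unfolding Miss_def Crowd_def M_def using D1 D12 by (simp add: c_nonneg K sum_c)
  finally show ?thesis
    unfolding event_prob_def M_def[symmetric] t_def E_def by simp
qed

theorem mainTheorem4:
  fixes p :: real and d :: nat and \<Delta> :: int and x :: "nat \<Rightarrow> int"
  assumes "1 \<le> p"
    and "\<forall>i<d. -\<Delta> \<le> x i \<and> x i \<le> \<Delta>"
    and "\<exists>i<d. x i \<noteq> 0"
  shows "(\<forall>D1 D2 K. 0 < D1 \<longrightarrow> D1 \<le> D2 \<longrightarrow> 0 < K \<longrightarrow>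
            event_prob p d x D1 D2 K \<ge> 1 - exp (- (D1 powr p)) - D2 powr p / K)
       \<and> (\<forall>\<delta>2. 0 < \<delta>2 \<longrightarrow> \<delta>2 < 1 \<longrightarrow>
            (let D1 = ln (2 / \<delta>2) powr (1 / p); D2 = 2 * D1; K = 2 * D2 powr p / \<delta>2
             in event_prob p d x D1 D2 K \<ge> 1 - \<delta>2))"
proof (intro conjI allI impI)
  have p: "0 < p"
    using assms(1) by simp
  show "event_prob p d x D1 D2 K \<ge> 1 - exp (- (D1 powr p)) - D2 powr p / K"
    if "0 < D1" "D1 \<le> D2" "0 < K" for D1 D2 K
    using event_prob_lower_bound[OF p assms(3) that] .
  fix \<delta> :: real
  assume \<delta>: "0 < \<delta>" "\<delta> < 1"
  define D1 where "D1 = ln (2 / \<delta>) powr (1 / p)"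
  define K where "K = 2 * (2 * D1) powr p / \<delta>"
  have "0 < ln (2 / \<delta>)"
    using \<delta> by simp
  then have D1: "0 < D1" and D1_p: "D1 powr p = ln (2 / \<delta>)"
    using p by (simp_all add: D1_def powr_powr)
  have K: "0 < K"
    using D1 \<delta> by (simp add: K_def)
  have "exp (- (D1 powr p)) = \<delta> / 2" and "(2 * D1) powr p / K = \<delta> / 2"
    using \<delta> D1 by (simp_all add: D1_p exp_minus K_def)
  with event_prob_lower_bound[OF p assms(3) D1 _ K, of "2 * D1"] D1
  show "let D1 = ln (2 / \<delta>) powr (1 / p); D2 = 2 * D1; K = 2 * D2 powr p / \<delta>
        in event_prob p d x D1 D2 K \<ge> 1 - \<delta>"
    unfolding Let_def D1_def[symmetric] K_def[symmetric] by simp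
qed

end
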